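(* For all $n$, $\mathrm{Sort}_n(132,321)=\mathrm{Av}_n(123,132^{\star})$.
   Context: $\mathrm{Av}_n(123,132^{\star})$ is the set of $x\in S_n$ that avoid the classical pattern $123$ (no subsequence order-isomorphic to $123$) and the bivincular pattern $132^{\star}$, where an occurrence of $132^{\star}$ in $x=x_1\cdots x_n$ is a pair of indices $a<b<n$ with $x_a<x_{b+1}$ and $x_b=x_{b+1}+1$. For a set $T$ of patterns, the map $s_T$ is defined as follows: the entries of the input permutation are read from left to right, with an initially empty stack. At each step, if the input is nonempty and pushing the next input entry onto the stack produces a stack whose contents, read from top to bottom, avoid every pattern in $T$, that entry is pushed; otherwise the top entry of the stack is popped and appended to the output. When the input is exhausted, the remaining stack entries are popped one at a time to the output. Write $s_{\sigma,\tau}=s_{\{\sigma,\tau\}}$ and $s=s_{\{21\}}$ (West's stack-sorting map). $\mathrm{Sort}_n(\sigma,\tau)$ is the set of $x\in S_n$ with $s(s_{\sigma,\tau}(x))=12\cdots n$. *)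

theory Defs
  imports Main "HOL-Library.Sublist"
begin

definition perms :: "nat \<Rightarrow> nat list set" where
  "perms n = {xs. distinct xs \<and> set xs = {1..n}}"

definition order_iso :: "nat list \<Rightarrow> nat list \<Rightarrow> bool" where
  "order_iso ys p \<longleftrightarrow> length ys = length p \<and>
     (\<forall>i<length p. \<forall>j<length p. (ys ! i < ys ! j) = (p ! i < p ! j))"

definition contains :: "nat list \<Rightarrow> nat list \<Rightarrow> bool" where
  "contains p xs \<longleftrightarrow> (\<exists>ys. subseq ys xs \<and> order_iso ys p)"

definition avoids :: "nat list \<Rightarrow> nat list \<Rightarrow> bool" where
  "avoids p xs \<longleftrightarrow> \<not> contains p xs"

definition avoids_all :: "nat list list \<Rightarrow> nat list \<Rightarrow> bool" where
  "avoids_all T xs \<longleftrightarrow> (\<forall>p\<in>set T. avoids p xs)"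

text \<open>Occurrence of the bivincular pattern 132*: 1-based indices a < b < n with
  x_a < x_(b+1) and x_b = x_(b+1) + 1 (here 0-based).\<close>
definition contains_132star :: "nat list \<Rightarrow> bool" where
  "contains_132star xs \<longleftrightarrow> (\<exists>a b. a < b \<and> b + 1 < length xs \<and>
      xs ! a < xs ! (b + 1) \<and> xs ! b = xs ! (b + 1) + 1)"

text \<open>Arguments: remaining input, stack
  (head = top, so the list is the stack read top to bottom).
  Convention: pushing onto the empty stack is always allowed (irrelevant when all
  patterns in T have length at least 2).\<close>
fun stk :: "nat list list \<Rightarrow> nat list \<Rightarrow> nat list \<Rightarrow> nat list" where
  "stk T [] st = st"
| "stk T (x # inp) [] = stk T inp [x]"
| "stk T (x # inp) (y # st) =
     (if avoids_all T (x # y # st) then stk T inp (x # y # st)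
      else y # stk T (x # inp) st)"

definition s_T :: "nat list list \<Rightarrow> nat list \<Rightarrow> nat list" where
  "s_T T xs = stk T xs []"

definition west_s :: "nat list \<Rightarrow> nat list" where
  "west_s xs = s_T [[2,1]] xs"

definition Sort :: "nat \<Rightarrow> nat list \<Rightarrow> nat list \<Rightarrow> nat list set" where
  "Sort n \<sigma> \<tau> = {x \<in> perms n. west_s (s_T [\<sigma>, \<tau>] x) = [1..<n+1]}"

definition Av_123_132star :: "nat \<Rightarrow> nat list set" where
  "Av_123_132star n = {x \<in> perms n. avoids [1,2,3] x \<and> \<not> contains_132star x}"

end

theory Submission
  imports Defs "HOL-Library.Multiset"
begin

text \<open>West's stack sorts a list iff the list avoids 231 (Knuth), so \<open>x\<close> lies in
  \<open>Sort\<^sub>n(132,321)\<close> iff the output of the (132,321)-machine on \<open>x\<close> avoids 231.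

  If \<open>x\<close> contains 123 as \<open>p q r\<close>, or 132* as \<open>a \<dots> (c+1) c\<close>, let \<open>m\<close> be the minimum of the
  prefix before \<open>q\<close> (resp. \<open>c+1\<close>). Everything below \<open>m\<close> in the stack is larger than \<open>m\<close>, so
  \<open>m\<close> is never popped before the input is exhausted. As the stack never contains 321, \<open>q\<close> has
  been output once \<open>r\<close> is pushed above \<open>m\<close>, so the output contains \<open>q r m\<close>; in the 132* case
  \<open>c\<close> is pushed directly onto \<open>c+1\<close>, so the output contains \<open>c (c+1) m\<close>. Both are 231.

  Conversely, let \<open>x\<close> avoid 123 and 132*. Then the stack below its top stays increasing: if
  an entry \<open>e\<close> is pushed onto \<open>y\<close> while some \<open>s < y\<close> lies below \<open>y\<close>, then \<open>s < e < y\<close>, and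
  the value \<open>e+1\<close> can be neither \<open>y\<close> (132*) nor an entry already output, on the stack, or still
  to be read. Moreover a popped entry exceeds every entry not yet read (else 123). So after a popped
  entry \<open>y\<close> the output consists of smaller entries followed by the increasing rest of the
  stack, and no 231 starts at \<open>y\<close>.\<close>

lemma sorted_wrt_subseq:
  assumes "subseq xs ys" "sorted_wrt R ys"
  shows "sorted_wrt R xs"
  using assms
proof (induction rule: list_emb.induct)
  case (list_emb_Cons2 x y xs ys)
  then show ?case by (auto elim: list_emb_set)
qed auto

lemma subseq_set: "subseq xs ys \<Longrightarrow> set xs \<subseteq> set ys"
  by (induction rule: list_emb.induct) auto

lemma subseq_Cons_Cons_iff:
  "subseq (a # xs) (y # ys) \<longleftrightarrow> (a = y \<and> subseq xs ys) \<or> subseq (a # xs) ys"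
  by (cases "a = y") (auto dest: subseq_Cons')

lemma subseq_pair_Cons:
  "subseq [a,b] (x # xs) \<longleftrightarrow> (a = x \<and> b \<in> set xs) \<or> subseq [a,b] xs"
  by (auto simp: subseq_singleton_left dest: subseq_Cons')

lemma subseq_Cons_append: "a \<in> set xs \<Longrightarrow> subseq ys zs \<Longrightarrow> subseq (a # ys) (xs @ zs)"
  using list_emb_append_mono[of "(=)" "[a]" xs ys zs] by (simp add: subseq_singleton_left)

lemma subseq_Cons_append_right:
  "subseq (b # cs) (xs @ ys) \<Longrightarrow> b \<notin> set xs \<Longrightarrow> subseq (b # cs) ys"
  by (induction xs) (auto split: if_splits)

lemma subseq_triple_split:
  assumes "subseq [a,b,c] xs"
  obtains u v w where "xs = u @ a # v @ b # w" "c \<in> set w"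
proof -
  obtain u ys where "xs = u @ a # ys" "subseq [b,c] ys"
    using list_emb_ConsD[OF assms] by auto
  moreover obtain v w where "ys = v @ b # w" "subseq [c] w"
    using list_emb_ConsD[OF \<open>subseq [b,c] ys\<close>] by auto
  ultimately show ?thesis
    using that by (simp add: subseq_singleton_left)
qed


lemma contains_mono: "contains p xs \<Longrightarrow> subseq xs ys \<Longrightarrow> contains p ys"
  unfolding contains_def using subseq_order.trans by blast

lemma avoids_subseq: "avoids p ys \<Longrightarrow> subseq xs ys \<Longrightarrow> avoids p xs"
  unfolding avoids_def using contains_mono by blast

lemma avoids_singleton: "2 \<le> length p \<Longrightarrow> avoids p [x]"
  unfolding avoids_def contains_def order_iso_def using list_emb_length by fastforce

lemma avoids_all_ConsD: "avoids_all T (x # xs) \<Longrightarrow> avoids_all T xs"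
  unfolding avoids_all_def using avoids_subseq[of _ "x # xs" xs] by auto

lemma order_iso_3:
  "order_iso [a,b,c] [p,q,r] \<longleftrightarrow> (a < b \<longleftrightarrow> p < q) \<and> (b < a \<longleftrightarrow> q < p) \<and>
     (a < c \<longleftrightarrow> p < r) \<and> (c < a \<longleftrightarrow> r < p) \<and> (b < c \<longleftrightarrow> q < r) \<and> (c < b \<longleftrightarrow> r < q)"
  unfolding order_iso_def by (auto simp: numeral_3_eq_3 All_less_Suc)

lemma contains_length3:
  assumes "length p = 3"
  shows "contains p xs \<longleftrightarrow> (\<exists>a b c. subseq [a,b,c] xs \<and> order_iso [a,b,c] p)"
proof -
  have "length ys = 3 \<longleftrightarrow> (\<exists>a b c. ys = [a,b,c])" for ys :: "nat list"
    by (auto simp: numeral_3_eq_3 length_Suc_conv)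
  then show ?thesis
    using assms unfolding contains_def by (metis order_iso_def)
qed

lemma contains_123_iff: "contains [1,2,3] xs \<longleftrightarrow> (\<exists>a b c. subseq [a,b,c] xs \<and> a < b \<and> b < c)"
  by (simp add: contains_length3 order_iso_3) (meson less_trans not_less_iff_gr_or_eq)

lemma contains_231_iff: "contains [2,3,1] xs \<longleftrightarrow> (\<exists>a b c. subseq [a,b,c] xs \<and> c < a \<and> a < b)"
  by (simp add: contains_length3 order_iso_3) (meson less_trans not_less_iff_gr_or_eq)

lemma contains_132_iff: "contains [1,3,2] xs \<longleftrightarrow> (\<exists>a b c. subseq [a,b,c] xs \<and> a < c \<and> c < b)"
  by (simp add: contains_length3 order_iso_3) (meson less_trans not_less_iff_gr_or_eq)

lemma contains_321_iff: "contains [3,2,1] xs \<longleftrightarrow> (\<exists>a b c. subseq [a,b,c] xs \<and> c < b \<and> b < a)"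
  by (simp add: contains_length3 order_iso_3) (meson less_trans not_less_iff_gr_or_eq)

lemma contains_231I: "subseq [a,b,c] xs \<Longrightarrow> c < a \<Longrightarrow> a < b \<Longrightarrow> contains [2,3,1] xs"
  unfolding contains_231_iff by blast

lemma avoids_21_iff_sorted: "avoids_all [[2,1]] xs \<longleftrightarrow> sorted xs"
proof -
  have "order_iso ys [2,1] \<longleftrightarrow> (\<exists>a b. ys = [a,b] \<and> b < a)" for ys
    unfolding order_iso_def by (cases ys; cases "tl ys"; auto simp: All_less_Suc)
  then have "avoids_all [[2,1]] xs \<longleftrightarrow> (\<forall>a b. subseq [a,b] xs \<longrightarrow> a \<le> b)"
    by (auto simp: avoids_all_def avoids_def contains_def not_less)
  also have "\<dots> \<longleftrightarrow> sorted xs"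
  proof (induction xs)
    case (Cons x xs)
    have "(\<forall>a b. subseq [a,b] (x # xs) \<longrightarrow> a \<le> b) \<longleftrightarrow>
        (\<forall>b\<in>set xs. x \<le> b) \<and> (\<forall>a b. subseq [a,b] xs \<longrightarrow> a \<le> b)"
      unfolding subseq_pair_Cons by blast
    then show ?case using Cons.IH by simp
  qed simp
  finally show ?thesis .
qed

text \<open>A constant rather than the literal list: the simplifier rewrites the numeral \<open>1\<close> in
  \<open>[[1,3,2],[3,2,1]]\<close> to \<open>Suc 0\<close>, after which lemmas about the literal no longer apply.\<close>

definition pats_132_321 :: "nat list list" where
  "pats_132_321 = [[1,3,2],[3,2,1]]"

lemma avoids_132_321_iff:
  "avoids_all pats_132_321 xs \<longleftrightarrow>
     (\<forall>a b c. subseq [a,b,c] xs \<longrightarrow> c < b \<longrightarrow> c \<le> a \<and> a \<le> b)"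
proof -
  have "avoids_all pats_132_321 xs \<longleftrightarrow> \<not> contains [1,3,2] xs \<and> \<not> contains [3,2,1] xs"
    by (simp add: avoids_all_def avoids_def pats_132_321_def)
  then show ?thesis
    unfolding contains_132_iff contains_321_iff by (meson not_le)
qed

lemma contains_132star_iff:
  "contains_132star xs \<longleftrightarrow> (\<exists>u c w. xs = u @ Suc c # c # w \<and> (\<exists>a\<in>set u. a < c))"
proof
  assume "contains_132star xs"
  then obtain i b where ib: "i < b" "b + 1 < length xs" "xs ! i < xs ! (b + 1)"
    "xs ! b = Suc (xs ! (b + 1))"
    unfolding contains_132star_def by auto
  have "xs = take b xs @ xs ! b # xs ! (b + 1) # drop (b + 2) xs"
    using ib(2) by (simp add: Cons_nth_drop_Suc)
  moreover have "xs ! i \<in> set (take b xs)"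
    using ib by (auto simp: in_set_conv_nth intro!: exI[of _ i])
  ultimately show "\<exists>u c w. xs = u @ Suc c # c # w \<and> (\<exists>a\<in>set u. a < c)"
    using ib by metis
next
  assume "\<exists>u c w. xs = u @ Suc c # c # w \<and> (\<exists>a\<in>set u. a < c)"
  then obtain u c w i where "xs = u @ Suc c # c # w" "i < length u" "u ! i < c"
    by (auto simp: in_set_conv_nth)
  then show "contains_132star xs"
    unfolding contains_132star_def
    by (intro exI[of _ i] exI[of _ "length u"]) (auto simp: nth_append)
qed


section \<open>Stack machines\<close>

fun stk_run :: "nat list list \<Rightarrow> nat list \<Rightarrow> nat list \<Rightarrow> nat list \<times> nat list" where
  "stk_run T [] st = ([], st)"
| "stk_run T (x # inp) [] = stk_run T inp [x]"
| "stk_run T (x # inp) (y # st) =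
     (if avoids_all T (x # y # st) then stk_run T inp (x # y # st)
      else apfst (Cons y) (stk_run T (x # inp) st))"

lemma stk_append: "stk T (u @ v) st = fst (stk_run T u st) @ stk T v (snd (stk_run T u st))"
  by (induction T u st rule: stk_run.induct) auto

lemma snd_stk_run_append: "snd (stk_run T (u @ v) st) = snd (stk_run T v (snd (stk_run T u st)))"
  by (induction T u st rule: stk_run.induct) auto

lemma mset_stk_run: "mset (fst (stk_run T u st)) + mset (snd (stk_run T u st)) = mset u + mset st"
  by (induction T u st rule: stk_run.induct) auto

lemma set_stk_run: "set (fst (stk_run T u st)) \<union> set (snd (stk_run T u st)) = set u \<union> set st"
  by (metis mset_stk_run set_mset_mset set_mset_union)

lemma distinct_stk_run: "distinct (u @ st) \<Longrightarrow> distinct (fst (stk_run T u st) @ snd (stk_run T u st))"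
  using mset_stk_run[of T u st] by (metis mset_append mset_eq_imp_distinct_iff)

lemma mset_stk: "mset (stk T u st) = mset u + mset st"
  using stk_append[of T u "[]" st] mset_stk_run[of T u st] by simp

lemma stk_run_top: "u \<noteq> [] \<Longrightarrow> \<exists>st'. snd (stk_run T u st) = last u # st'"
  by (induction T u st rule: stk_run.induct) auto

lemma subseq_stk: "subseq st (stk T u st)"
  by (induction T u st rule: stk.induct) (auto dest: subseq_Cons')

lemma subseq_stk_run_stk:
  "subseq ys (fst (stk_run T u st) @ snd (stk_run T u st)) \<Longrightarrow> subseq ys (stk T (u @ v) st)"
  unfolding stk_append using subseq_stk subseq_append' subseq_order.trans by blast

lemma stk_run_avoids:
  assumes "\<forall>p\<in>set T. 2 \<le> length p" "avoids_all T st"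
  shows "avoids_all T (snd (stk_run T u st))"
  using assms
proof (induction T u st rule: stk_run.induct)
  case (2 T x inp)
  then show ?case by (simp add: avoids_all_def avoids_singleton)
next
  case (3 T x inp y st)
  then show ?case by (auto dest: avoids_all_ConsD)
qed simp


section \<open>West's stack sorts exactly the 231-avoiding lists\<close>

lemma sorted_stk_21:
  assumes "sorted st" "\<not> contains [2,3,1] (rev st @ inp)"
  shows "sorted (stk [[2,1]] inp st)"
proof -
  \<comment> \<open>\<open>T\<close> stays abstract for the same reason as \<open>pats_132_321\<close>.\<close>
  have "sorted (stk T inp st)"
    if "\<And>xs. avoids_all T xs \<longleftrightarrow> sorted xs" "sorted st" "\<not> contains [2,3,1] (rev st @ inp)" for T inp st
    using that
  proof (induction T inp st rule: stk.induct)
    case (3 T x inp y st)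
    show ?case
    proof (cases "sorted (x # y # st)")
      case True
      with 3 show ?thesis by simp
    next
      case False
      then have pop: "\<not> avoids_all T (x # y # st)"
        using "3.prems"(1) by blast
      from False have "y < x"
        using "3.prems"(2) by auto
      have "subseq (rev st @ x # inp) (rev st @ y # x # inp)"
        by (simp add: subseq_append' list_emb_Cons)
      then have "\<not> contains [2,3,1] (rev st @ x # inp)"
        using "3.prems"(3) contains_mono by auto
      then have "sorted (stk T (x # inp) st)"
        using "3.IH"(2) "3.prems"(1,2) pop by simp
      moreover have "y \<le> e" if "e \<in> set (stk T (x # inp) st)" for e
      proof (rule ccontr)
        assume "\<not> y \<le> e"
        have "e \<in> set (x # inp) \<union> set st"
          using that mset_stk[of T "x # inp" st] by (metis set_mset_mset set_mset_union)
        with \<open>\<not> y \<le> e\<close> \<open>y < x\<close> "3.prems"(2) have "e \<in> set inp" by auto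
        then have "subseq [y,x,e] (rev (y # st) @ x # inp)"
          by (simp add: subseq_singleton_left list_emb_append2)
        with \<open>\<not> y \<le> e\<close> \<open>y < x\<close> "3.prems"(3) show False
          by (meson contains_231I not_le)
      qed
      ultimately show ?thesis
        using pop by simp
    qed
  qed simp_all
  with assms avoids_21_iff_sorted show ?thesis by blast
qed

lemma not_sorted_stk_21:
  assumes "contains [2,3,1] xs"
  shows "\<not> sorted (stk [[2,1]] xs [])"
proof
  assume sorted: "sorted (stk [[2,1]] xs [])"
  obtain b c a where bca: "subseq [b,c,a] xs" "a < b" "b < c"
    using assms unfolding contains_231_iff by blast
  obtain u v w where "xs = u @ b # v @ c # w" "a \<in> set w"
    using subseq_triple_split[OF bca(1)] .
  then have xs: "xs = (u @ b # v @ [c]) @ w"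
    by simp
  define r where "r = stk_run [[2,1]] (u @ b # v @ [c]) []"
  obtain st' where st': "snd r = c # st'"
    using stk_run_top[of "u @ b # v @ [c]" "[[2,1]]" "[]"] unfolding r_def by auto
  have "sorted (snd r)"
    using stk_run_avoids[of "[[2,1]]" "[]"] unfolding r_def avoids_21_iff_sorted by simp
  then have "b \<notin> set (snd r)"
    using bca st' by auto
  moreover have "b \<in> set (fst r) \<union> set (snd r)"
    using set_stk_run[of "[[2,1]]" "u @ b # v @ [c]" "[]"] unfolding r_def by auto
  moreover have "a \<in> set (stk [[2,1]] w (snd r))"
    using mset_stk \<open>a \<in> set w\<close> by (metis UnI1 set_mset_mset set_mset_union)
  ultimately have "b \<le> a"
    using sorted unfolding xs stk_append r_def[symmetric] sorted_append by blast
  with bca show False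
    by simp
qed

lemma sorted_stk_21_iff: "sorted (stk [[2,1]] xs []) \<longleftrightarrow> \<not> contains [2,3,1] xs"
  using sorted_stk_21[of "[]" xs] not_sorted_stk_21[of xs] by auto


section \<open>The (132,321)-machine\<close>

lemma avoids_132_321_Cons:
  "avoids_all pats_132_321 (x # xs) \<longleftrightarrow>
     avoids_all pats_132_321 xs \<and> (\<forall>b c. subseq [b,c] xs \<longrightarrow> c < b \<longrightarrow> c \<le> x \<and> x \<le> b)"
  unfolding avoids_132_321_iff subseq_Cons_Cons_iff by blast

lemma avoids_132_321_increasing: "sorted_wrt (<) xs \<Longrightarrow> avoids_all pats_132_321 xs"
  unfolding avoids_132_321_iff by (fastforce dest: sorted_wrt_subseq)

lemma stk_run_avoids_132_321:
  "avoids_all pats_132_321 st \<Longrightarrow> avoids_all pats_132_321 (snd (stk_run pats_132_321 u st))"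
  by (rule stk_run_avoids) (simp_all add: pats_132_321_def)

lemma avoids_132_321_between:
  assumes "avoids_all pats_132_321 (r # P @ m # R)" "m < q" "q < r"
  shows "q \<notin> set P"
proof
  assume "q \<in> set P"
  then have "subseq [r,q,m] (r # P @ m # R)"
    by (simp add: subseq_Cons_append subseq_singleton_left)
  with assms show False
    unfolding avoids_132_321_iff by fastforce
qed

lemma push_onto_increasing:
  assumes "sorted_wrt (<) st"
  shows "avoids_all pats_132_321 (x # y # st) \<longleftrightarrow> (\<forall>s\<in>set st. s < y \<longrightarrow> s \<le> x \<and> x \<le> y)"
proof -
  have no_descent: "\<not> (subseq [b,c] st \<and> c < b)" for b c
    using sorted_wrt_subseq[OF _ assms, of "[b,c]"] by auto
  have "avoids_all pats_132_321 (y # st)"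
    using assms avoids_132_321_Cons avoids_132_321_increasing no_descent by blast
  then show ?thesis
    unfolding avoids_132_321_Cons[of x] subseq_pair_Cons using no_descent by blast
qed

lemma push_onto_minimum:
  assumes "avoids_all pats_132_321 (m # R)" "\<forall>r\<in>set R. m < r"
  shows "avoids_all pats_132_321 (x # m # R)"
proof -
  have "\<not> (subseq [b,c] (m # R) \<and> c < b)" for b c
  proof
    assume descent: "subseq [b,c] (m # R) \<and> c < b"
    then have "c \<in> set R"
      unfolding subseq_pair_Cons using subseq_set by fastforce
    with assms(2) have "m < c" by blast
    moreover have "subseq [b,c] R"
      using descent \<open>m < c\<close> unfolding subseq_pair_Cons by auto
    ultimately show False
      using assms(1) descent unfolding avoids_132_321_Cons[of m] by fastforce
  qed
  with assms(1) show ?thesis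
    unfolding avoids_132_321_Cons[of x] by blast
qed

lemma push_predecessor:
  assumes "avoids_all pats_132_321 (Suc c # L)" "Suc c \<notin> set L"
  shows "avoids_all pats_132_321 (c # Suc c # L)"
proof -
  have "d \<le> c \<and> c \<le> b" if "subseq [b,d] (Suc c # L)" "d < b" for b d
  proof (cases "subseq [b,d] L")
    case True
    then have "d \<noteq> Suc c"
      using assms(2) subseq_set by fastforce
    with True that(2) assms(1) show ?thesis
      unfolding avoids_132_321_Cons by fastforce
  next
    case False
    with that show ?thesis
      unfolding subseq_pair_Cons by auto
  qed
  with assms(1) show ?thesis
    unfolding avoids_132_321_Cons[of c] by blast
qed

lemma stk_run_keeps_minimum:
  assumes "avoids_all pats_132_321 st" "st = P @ m # R" "\<forall>r\<in>set R. m < r"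
  shows "\<exists>P'. snd (stk_run pats_132_321 u st) = P' @ m # R"
  using assms
proof (induction pats_132_321 u st arbitrary: P rule: stk_run.induct)
  case (3 x inp y st)
  show ?case
  proof (cases "avoids_all pats_132_321 (x # y # st)")
    case True
    have "x # y # st = (x # P) @ m # R"
      using "3.prems"(2) by simp
    then obtain P' where "snd (stk_run pats_132_321 inp (x # y # st)) = P' @ m # R"
      using "3.hyps"(1) True "3.prems"(3) by blast
    with True show ?thesis
      by auto
  next
    case False
    show ?thesis
    proof (cases P)
      case Nil
      with "3.prems" False show ?thesis
        using push_onto_minimum by auto
    next
      case (Cons p P')
      with "3.prems" False show ?thesis
        using "3.hyps"(2)[of P'] avoids_all_ConsD by auto
    qed
  qed
qed auto

lemma stk_increasing_suffix:
  assumes "sorted_wrt (<) st"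
  shows "\<exists>pre. stk pats_132_321 u st = pre @ st"
proof (cases st)
  case Nil
  then show ?thesis by simp
next
  case (Cons m R)
  with assms obtain P' where "snd (stk_run pats_132_321 u st) = P' @ st"
    using stk_run_keeps_minimum[of st "[]" m R u] avoids_132_321_increasing by auto
  then show ?thesis
    using stk_append[of pats_132_321 u "[]" st] by auto
qed

lemma minimum_stays:
  assumes "u \<noteq> []" "distinct u"
  shows "\<exists>P R. snd (stk_run pats_132_321 (u @ z) []) = P @ Min (set u) # R \<and> set R \<subseteq> set u"
proof -
  define m where "m = Min (set u)"
  have "m \<in> set u"
    using assms m_def by simp
  then obtain u1 u2 where u: "u = u1 @ m # u2"
    by (meson split_list)
  define st where "st = snd (stk_run pats_132_321 (u1 @ [m]) [])"
  obtain R where R: "st = m # R"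
    using stk_run_top[of "u1 @ [m]"] unfolding st_def by auto
  have "distinct (fst (stk_run pats_132_321 (u1 @ [m]) []) @ st)"
    using distinct_stk_run[of "u1 @ [m]" "[]"] assms(2) u unfolding st_def by simp
  moreover have "set st \<subseteq> set u1 \<union> {m}"
    using set_stk_run[of pats_132_321 "u1 @ [m]" "[]"] unfolding st_def by auto
  ultimately have R_u1: "set R \<subseteq> set u1"
    using R by auto
  moreover have "m < z" if "z \<in> set u1" for z
  proof -
    have "z \<in> set u" "z \<noteq> m"
      using that u assms(2) by auto
    then show ?thesis
      unfolding m_def using Min_le[of "set u" z] by (simp add: order.not_eq_order_implies_strict)
  qed
  ultimately have "\<forall>r\<in>set R. m < r"
    by blast
  moreover have "avoids_all pats_132_321 st"
    unfolding st_def by (simp add: stk_run_avoids_132_321 avoids_132_321_increasing)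
  ultimately obtain P where "snd (stk_run pats_132_321 (u2 @ z) st) = P @ m # R"
    using stk_run_keeps_minimum[of st "[]" m R "u2 @ z"] R by auto
  moreover have "u @ z = (u1 @ [m]) @ u2 @ z"
    using u by simp
  ultimately have "snd (stk_run pats_132_321 (u @ z) []) = P @ m # R"
    using snd_stk_run_append[of pats_132_321 "u1 @ [m]" "u2 @ z" "[]"] unfolding st_def by simp
  moreover have "set R \<subseteq> set u"
    using R_u1 u by auto
  ultimately show ?thesis
    unfolding m_def by blast
qed

section \<open>Inputs containing 123 or 132*\<close>

lemma contains_231_if_contains_123:
  assumes "distinct xs" "contains [1,2,3] xs"
  shows "contains [2,3,1] (stk pats_132_321 xs [])"
proof -
  obtain p q r where pqr: "subseq [p,q,r] xs" "p < q" "q < r"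
    using assms(2) unfolding contains_123_iff by blast
  obtain u v w where xs: "xs = u @ p # v @ q # w" and "r \<in> set w"
    using subseq_triple_split[OF pqr(1)] .
  then obtain v' w' where "w = v' @ r # w'"
    by (meson split_list)
  define u' where "u' = u @ p # v"
  define z where "z = q # v' @ [r]"
  have xs': "xs = (u' @ z) @ w'"
    using xs \<open>w = v' @ r # w'\<close> unfolding u'_def z_def by simp
  have "distinct (u' @ z)"
    using assms(1) unfolding xs' by (simp only: distinct_append)
  define m where "m = Min (set u')"
  have "m \<le> p"
    unfolding m_def by (rule Min_le) (auto simp: u'_def)
  with pqr(2) have "m < q"
    by simp
  define out where "out = fst (stk_run pats_132_321 (u' @ z) [])"
  define st where "st = snd (stk_run pats_132_321 (u' @ z) [])"
  obtain P R where st_min: "st = P @ m # R" "set R \<subseteq> set u'"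
    using minimum_stays[of u' z] \<open>distinct (u' @ z)\<close> unfolding st_def m_def u'_def by auto
  obtain st' where "st = r # st'"
    using stk_run_top[of "u' @ z"] unfolding st_def z_def by auto
  with st_min(1) \<open>m < q\<close> pqr(3) obtain P' where st: "st = r # P' @ m # R"
    by (cases P) auto
  have "avoids_all pats_132_321 st"
    unfolding st_def by (simp add: stk_run_avoids_132_321 avoids_132_321_increasing)
  then have "q \<notin> set P'"
    unfolding st using \<open>m < q\<close> pqr(3) by (rule avoids_132_321_between)
  moreover have "q \<notin> set R"
    using st_min(2) \<open>distinct (u' @ z)\<close> unfolding z_def by auto
  ultimately have "q \<notin> set st"
    unfolding st using \<open>m < q\<close> pqr(3) by auto
  moreover have "q \<in> set out \<union> set st"
    using set_stk_run[of pats_132_321 "u' @ z" "[]"] unfolding out_def st_def z_def by auto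
  ultimately have "q \<in> set out"
    by blast
  moreover have "subseq [r,m] st"
    unfolding st by (simp add: subseq_singleton_left)
  ultimately have "subseq [q,r,m] (out @ st)"
    by (rule subseq_Cons_append)
  then have "subseq [q,r,m] (stk pats_132_321 xs [])"
    unfolding xs' out_def st_def by (rule subseq_stk_run_stk)
  then show ?thesis
    using \<open>m < q\<close> pqr(3) by (rule contains_231I)
qed

lemma contains_231_if_contains_132star:
  assumes "distinct xs" "contains_132star xs"
  shows "contains [2,3,1] (stk pats_132_321 xs [])"
proof -
  obtain u c w a where xs: "xs = (u @ [Suc c, c]) @ w" and "a \<in> set u" "a < c"
    using assms(2) unfolding contains_132star_iff by auto
  define m where "m = Min (set u)"
  have "m \<le> a"
    unfolding m_def using \<open>a \<in> set u\<close> by (rule Min_le[rotated]) simp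
  with \<open>a < c\<close> have "m < c"
    by simp
  have "distinct (u @ [Suc c])"
    using assms(1) unfolding xs by simp
  define st where "st = snd (stk_run pats_132_321 (u @ [Suc c]) [])"
  obtain P R where "st = P @ m # R"
    using minimum_stays[of u "[Suc c]"] \<open>a \<in> set u\<close> \<open>distinct (u @ [Suc c])\<close>
    unfolding st_def m_def by force
  moreover obtain st' where st': "st = Suc c # st'"
    using stk_run_top[of "u @ [Suc c]"] unfolding st_def by auto
  ultimately have "m \<in> set st'"
    using \<open>m < c\<close> by (cases P) auto
  have "distinct st"
    using distinct_stk_run[of "u @ [Suc c]" "[]" pats_132_321] \<open>distinct (u @ [Suc c])\<close>
    unfolding st_def by simp
  moreover have "avoids_all pats_132_321 st"
    unfolding st_def by (simp add: stk_run_avoids_132_321 avoids_132_321_increasing)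
  ultimately have "avoids_all pats_132_321 (c # Suc c # st')"
    using push_predecessor st' by simp
  then have "snd (stk_run pats_132_321 (u @ [Suc c, c]) []) = c # Suc c # st'"
    using snd_stk_run_append[of pats_132_321 "u @ [Suc c]" "[c]" "[]"] st' unfolding st_def by simp
  with \<open>m \<in> set st'\<close> have "subseq [c, Suc c, m] (snd (stk_run pats_132_321 (u @ [Suc c, c]) []))"
    by (simp add: subseq_singleton_left)
  then have "subseq [c, Suc c, m] (stk pats_132_321 xs [])"
    unfolding xs by (intro subseq_stk_run_stk list_emb_append2)
  then show ?thesis
    using \<open>m < c\<close> by (rule contains_231I) simp
qed

section \<open>Inputs avoiding 123 and 132*\<close>

text \<open>\<open>Out\<close> is the set of entries already output. The conditions involving \<open>Suc x\<close> and \<open>Suc c\<close>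
  are what remains of 132*-avoidance of the original input; the last two say that output entries
  exceed the remaining input, and exceed the top of the stack as long as something below the top
  is smaller than it.\<close>

definition sorting_invariant :: "nat \<Rightarrow> nat set \<Rightarrow> nat list \<Rightarrow> nat list \<Rightarrow> bool" where
  "sorting_invariant n Out inp st \<longleftrightarrow>
     distinct (st @ inp) \<and> Out \<union> set st \<union> set inp = {1..n} \<and>
     sorted_wrt (<) (tl st) \<and> \<not> contains [1,2,3] (rev st @ inp) \<and>
     (\<forall>x inp'. inp = x # inp' \<longrightarrow> hd st = Suc x \<longrightarrow> (\<forall>a\<in>set (tl st). x \<le> a)) \<and>
     (\<forall>p c w. inp = p @ Suc c # c # w \<longrightarrow> (\<forall>a\<in>set st \<union> set p. c \<le> a)) \<and>
     (\<forall>v\<in>Out. \<forall>z\<in>set inp. z < v) \<and>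
     (\<forall>v\<in>Out. \<forall>s\<in>set (tl st). s < hd st \<longrightarrow> hd st < v)"

lemma sorting_invariantI:
  assumes "distinct (st @ inp)" "Out \<union> set st \<union> set inp = {1..n}"
    "sorted_wrt (<) (tl st)" "\<not> contains [1,2,3] (rev st @ inp)"
    "\<And>x inp' a. inp = x # inp' \<Longrightarrow> hd st = Suc x \<Longrightarrow> a \<in> set (tl st) \<Longrightarrow> x \<le> a"
    "\<And>p c w a. inp = p @ Suc c # c # w \<Longrightarrow> a \<in> set st \<union> set p \<Longrightarrow> c \<le> a"
    "\<And>v z. v \<in> Out \<Longrightarrow> z \<in> set inp \<Longrightarrow> z < v"
    "\<And>v s. v \<in> Out \<Longrightarrow> s \<in> set (tl st) \<Longrightarrow> s < hd st \<Longrightarrow> hd st < v"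
  shows "sorting_invariant n Out inp st"
  unfolding sorting_invariant_def by (intro conjI allI impI ballI) (rule assms; assumption)+

lemma sorting_invariantD:
  assumes "sorting_invariant n Out inp st"
  shows "distinct (st @ inp)" "Out \<union> set st \<union> set inp = {1..n}"
    "sorted_wrt (<) (tl st)" "\<not> contains [1,2,3] (rev st @ inp)"
    "\<forall>x inp'. inp = x # inp' \<longrightarrow> hd st = Suc x \<longrightarrow> (\<forall>a\<in>set (tl st). x \<le> a)"
    "\<forall>p c w. inp = p @ Suc c # c # w \<longrightarrow> (\<forall>a\<in>set st \<union> set p. c \<le> a)"
    "\<forall>v\<in>Out. \<forall>z\<in>set inp. z < v"
    "\<forall>v\<in>Out. \<forall>s\<in>set (tl st). s < hd st \<longrightarrow> hd st < v"
  using assms unfolding sorting_invariant_def by (simp_all only: conj_imp_eq_imp_imp not_False_eq_True)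

lemma sorting_invariant_init:
  assumes "xs \<in> perms n" "\<not> contains [1,2,3] xs" "\<not> contains_132star xs"
  shows "sorting_invariant n {} xs []"
proof (rule sorting_invariantI)
  show "c \<le> a" if "xs = p @ Suc c # c # w" "a \<in> set [] \<union> set p" for p c w a
  proof (rule ccontr)
    assume "\<not> c \<le> a"
    with that have "xs = p @ Suc c # c # w \<and> (\<exists>a\<in>set p. a < c)"
      by (auto simp: not_le)
    then have "contains_132star xs"
      unfolding contains_132star_iff by blast
    with assms(3) show False ..
  qed
qed (use assms in \<open>simp_all add: perms_def\<close>)

lemma sorting_invariant_first_push:
  assumes "sorting_invariant n Out (x # inp) []"
  shows "sorting_invariant n Out inp [x]"
proof (rule sorting_invariantI)
  note inv = sorting_invariantD[OF assms]
  show "c \<le> a" if "inp = p @ Suc c # c # w" "a \<in> set [x] \<union> set p" for p c w a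
    using inv(6)[rule_format, of "x # p" c w a] that by simp
  show "Out \<union> set [x] \<union> set inp = {1..n}"
    unfolding inv(2)[symmetric] by auto
qed (use sorting_invariantD(1,4,7)[OF assms] in simp_all)

lemma sorting_invariant_push_increasing:
  assumes "sorting_invariant n Out (x # inp) (y # st)" "avoids_all pats_132_321 (x # y # st)"
    and s: "s \<in> set st"
  shows "y < s"
proof (rule ccontr)
  note inv = sorting_invariantD[OF assms(1)]
  have cover: "Out \<union> set (y # st) \<union> set (x # inp) = {1..n}"
    using inv(2) .
  have push: "\<forall>s\<in>set st. s < y \<longrightarrow> s \<le> x \<and> x \<le> y"
    using assms(2) push_onto_increasing inv(3) by simp
  assume "\<not> y < s"
  moreover have "s \<noteq> y" "s \<noteq> x" "x \<noteq> y"
    using s inv(1) by auto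
  ultimately have "s < y" "s < x" "x < y"
    using s push by auto
  show False
  proof (cases "y = Suc x")
    case True
    with inv(5)[rule_format, of x inp s] s \<open>s < x\<close> show False
      by simp
  next
    case False
    \<comment> \<open>The value \<open>Suc x\<close> lies strictly between \<open>s\<close> and \<open>y\<close>, yet cannot occur anywhere.\<close>
    with \<open>x < y\<close> have "Suc x < y"
      by simp
    moreover have "y \<in> {1..n}"
      unfolding cover[symmetric] by simp
    with \<open>Suc x < y\<close> have "Suc x \<in> {1..n}"
      by simp
    moreover have "Suc x \<notin> Out"
      using inv(8) s \<open>s < y\<close> \<open>Suc x < y\<close> by fastforce
    moreover have "Suc x \<notin> set st"
      using push \<open>Suc x < y\<close> by fastforce
    moreover have "Suc x \<notin> set inp"
    proof
      assume "Suc x \<in> set inp"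
      then have "subseq [s, x, Suc x] ((rev st @ [y]) @ x # inp)"
        using s by (intro subseq_Cons_append) (simp_all add: subseq_singleton_left)
      with inv(4) \<open>s < x\<close> show False
        unfolding contains_123_iff by auto
    qed
    ultimately show False
      unfolding cover[symmetric] by auto
  qed
qed

lemma sorting_invariant_push:
  assumes "sorting_invariant n Out (x # inp) (y # st)" "avoids_all pats_132_321 (x # y # st)"
  shows "sorting_invariant n Out inp (x # y # st)"
proof (rule sorting_invariantI)
  note inv = sorting_invariantD[OF assms(1)]
  show "sorted_wrt (<) (tl (x # y # st))"
    using inv(3) sorting_invariant_push_increasing[OF assms] by simp
  show "x' \<le> a" if "inp = x' # inp'" "hd (x # y # st) = Suc x'" "a \<in> set (tl (x # y # st))"
    for x' inp' a
    using inv(6)[rule_format, of "[]" x' inp' a] that by simp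
  show "c \<le> a" if "inp = p @ Suc c # c # w" "a \<in> set (x # y # st) \<union> set p" for p c w a
    using inv(6)[rule_format, of "x # p" c w a] that by simp
  show "distinct ((x # y # st) @ inp)"
    using inv(1) by auto
  show "Out \<union> set (x # y # st) \<union> set inp = {1..n}"
    unfolding inv(2)[symmetric] by auto
  show "\<not> contains [1,2,3] (rev (x # y # st) @ inp)"
    using inv(4) by simp
  show "z < v" if "v \<in> Out" "z \<in> set inp" for v z
    using inv(7) that by simp
  show "hd (x # y # st) < v" if "v \<in> Out" for v
    using inv(7) that by simp
qed

lemma sorting_invariant_pop:
  assumes "sorting_invariant n Out (x # inp) (y # st)" "\<not> avoids_all pats_132_321 (x # y # st)"
  shows "sorting_invariant n (insert y Out) (x # inp) st"
    and "\<forall>z\<in>set (x # inp). z < y"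
    and "sorted_wrt (<) st"
proof -
  note inv = sorting_invariantD[OF assms(1)]
  show st_incr: "sorted_wrt (<) st"
    using inv(3) by simp
  have no_123: "\<not> contains [1,2,3] (rev st @ y # x # inp)"
    using inv(4) by simp
  obtain s where "s \<in> set st" "s < y"
    using assms(2) push_onto_increasing[OF st_incr] by blast
  have below: "z < y" if z: "z \<in> set (x # inp)" for z
  proof (rule ccontr)
    assume "\<not> z < y"
    moreover have "z \<noteq> y"
      using z inv(1) by auto
    ultimately have "y < z"
      by simp
    have "subseq [s, y, z] (rev st @ y # x # inp)"
      using \<open>s \<in> set st\<close> z by (intro subseq_Cons_append) (auto simp: subseq_singleton_left)
    with no_123 \<open>s < y\<close> \<open>y < z\<close> show False
      unfolding contains_123_iff by auto
  qed
  then show "\<forall>z\<in>set (x # inp). z < y"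
    by blast
  show "sorting_invariant n (insert y Out) (x # inp) st"
  proof (rule sorting_invariantI)
    have "subseq (rev st @ x # inp) (rev st @ y # x # inp)"
      by (simp add: subseq_append' list_emb_Cons)
    with no_123 show "\<not> contains [1,2,3] (rev st @ x # inp)"
      using contains_mono by blast
    show "c \<le> a" if "x # inp = p @ Suc c # c # w" "a \<in> set st \<union> set p" for p c w a
      using inv(6)[rule_format, of p c w a] that by simp
    show "insert y Out \<union> set st \<union> set (x # inp) = {1..n}"
      unfolding inv(2)[symmetric] by auto
    show "z < v" if "v \<in> insert y Out" "z \<in> set (x # inp)" for v z
      using that below inv(7) by auto
    show "x' \<le> a" if "x # inp = x' # inp'" "hd st = Suc x'" "a \<in> set (tl st)" for x' inp' a
      using st_incr that by (cases st) auto
    show "hd st < v" if "s' \<in> set (tl st)" "s' < hd st" for v s'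
      using st_incr that by (cases st) auto
    show "sorted_wrt (<) (tl st)"
      using st_incr by (cases st) auto
  qed (use inv(1) in simp)
qed

lemma not_contains_231_if_sorted_tl:
  assumes "sorted_wrt (<) (tl xs)"
  shows "\<not> contains [2,3,1] xs"
proof
  assume "contains [2,3,1] xs"
  then obtain a b c where abc: "subseq [a,b,c] xs" "c < a" "a < b"
    unfolding contains_231_iff by blast
  then have "subseq [b,c] (tl xs)"
    by (cases xs) (auto simp: subseq_Cons_Cons_iff dest: subseq_Cons' simp del: subseq_Cons2_iff)
  from sorted_wrt_subseq[OF this assms] abc show False
    by simp
qed

lemma not_contains_231_Cons_append:
  assumes "\<not> contains [2,3,1] (pre @ st)" "\<forall>z\<in>set pre. z < y" "sorted_wrt (<) st"
  shows "\<not> contains [2,3,1] (y # pre @ st)"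
proof
  assume "contains [2,3,1] (y # pre @ st)"
  then obtain a b c where abc: "subseq [a,b,c] (y # pre @ st)" "c < a" "a < b"
    unfolding contains_231_iff by blast
  show False
  proof (cases "subseq [a,b,c] (pre @ st)")
    case True
    with assms(1) abc show False
      by (meson contains_231I)
  next
    case False
    with abc have "a = y" and descent: "subseq [b,c] (pre @ st)"
      unfolding subseq_Cons_Cons_iff by auto
    with assms(2) abc(3) have "b \<notin> set pre"
      by auto
    with descent have "subseq [b,c] st"
      by (rule subseq_Cons_append_right)
    from sorted_wrt_subseq[OF this assms(3)] abc show False
      by simp
  qed
qed

lemma stk_avoids_231:
  assumes "sorting_invariant n Out inp st"
  shows "\<not> contains [2,3,1] (stk pats_132_321 inp st)"
  using assms
proof (induction pats_132_321 inp st arbitrary: Out rule: stk.induct)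
  case (1 st)
  then show ?case
    using not_contains_231_if_sorted_tl sorting_invariantD(3) by simp
next
  case (2 x inp)
  from "2.hyps"[OF sorting_invariant_first_push[OF "2.prems"]] show ?case
    by simp
next
  case (3 x inp y st)
  show ?case
  proof (cases "avoids_all pats_132_321 (x # y # st)")
    case True
    from "3.hyps"(1)[OF True sorting_invariant_push[OF "3.prems" True]] True show ?thesis
      by simp
  next
    case False
    note pop = sorting_invariant_pop[OF "3.prems" False]
    obtain pre where pre: "stk pats_132_321 (x # inp) st = pre @ st"
      using stk_increasing_suffix[OF pop(3)] by blast
    then have "set pre = set (x # inp)"
      using mset_stk[of pats_132_321 "x # inp" st] by (metis add_right_cancel mset_append set_mset_mset)
    with pop(2) have "\<forall>z\<in>set pre. z < y"
      by blast
    with "3.hyps"(2)[OF False pop(1)] pre pop(3) show ?thesis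
      using not_contains_231_Cons_append False by simp
  qed
qed

lemma stk_132_321_avoids_231_iff:
  assumes "xs \<in> perms n"
  shows "\<not> contains [2,3,1] (stk pats_132_321 xs []) \<longleftrightarrow>
    \<not> contains [1,2,3] xs \<and> \<not> contains_132star xs"
proof -
  have "distinct xs"
    using assms by (simp add: perms_def)
  show ?thesis
  proof
    assume "\<not> contains [2,3,1] (stk pats_132_321 xs [])"
    then show "\<not> contains [1,2,3] xs \<and> \<not> contains_132star xs"
      using contains_231_if_contains_123[OF \<open>distinct xs\<close>]
        contains_231_if_contains_132star[OF \<open>distinct xs\<close>] by meson
  next
    assume "\<not> contains [1,2,3] xs \<and> \<not> contains_132star xs"
    then show "\<not> contains [2,3,1] (stk pats_132_321 xs [])"
      by (elim conjE) (rule stk_avoids_231[OF sorting_invariant_init[OF assms]])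
  qed
qed

lemma eq_iff_sorted_if_mset_eq:
  assumes "mset xs = mset ys" "sorted ys"
  shows "xs = ys \<longleftrightarrow> sorted xs"
proof
  assume "sorted xs"
  then have "sort xs = xs"
    by (rule sorted_sort_id)
  moreover have "sort xs = ys"
    using properties_for_sort[OF assms(1)[symmetric] assms(2)] .
  ultimately show "xs = ys"
    by simp
qed (use assms(2) in simp)

lemma mset_perms:
  assumes "xs \<in> perms n"
  shows "mset xs = mset [1..<n+1]"
proof -
  have "set [1..<n+1] = {1..n}"
    by (simp only: set_upt Suc_eq_plus1[symmetric] atLeastLessThanSuc_atLeastAtMost)
  with assms have "distinct xs" "set xs = set [1..<n+1]"
    unfolding perms_def by simp_all
  then show ?thesis
    using set_eq_iff_mset_eq_distinct[of xs "[1..<n+1]"] by simp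
qed

lemma sorted_by_132_321_then_west_iff:
  assumes "xs \<in> perms n"
  shows "west_s (s_T [[1,3,2],[3,2,1]] xs) = [1..<n+1] \<longleftrightarrow>
    \<not> contains [1,2,3] xs \<and> \<not> contains_132star xs"
proof -
  have "mset (stk [[2,1]] (stk pats_132_321 xs []) []) = mset [1..<n+1]"
    using mset_perms[OF assms] by (simp add: mset_stk)
  then have "west_s (s_T [[1,3,2],[3,2,1]] xs) = [1..<n+1] \<longleftrightarrow>
      sorted (stk [[2,1]] (stk pats_132_321 xs []) [])"
    unfolding west_s_def s_T_def pats_132_321_def[symmetric]
    by (rule eq_iff_sorted_if_mset_eq[OF _ sorted_upt])
  also have "\<dots> \<longleftrightarrow> \<not> contains [1,2,3] xs \<and> \<not> contains_132star xs"
    unfolding sorted_stk_21_iff by (rule stk_132_321_avoids_231_iff[OF assms])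
  finally show ?thesis .
qed

theorem theorem3p7:
  shows "\<forall>n. Sort n [1,3,2] [3,2,1] = Av_123_132star n"
proof (intro allI set_eqI)
  fix n xs
  show "xs \<in> Sort n [1,3,2] [3,2,1] \<longleftrightarrow> xs \<in> Av_123_132star n"
  proof (cases "xs \<in> perms n")
    case True
    then show ?thesis
      using sorted_by_132_321_then_west_iff[OF True]
      unfolding Sort_def Av_123_132star_def avoids_def mem_Collect_eq
      by (simp only: True simp_thms)
  qed (simp add: Sort_def Av_123_132star_def)
qed

end
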